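(* Let $\mathrm{nF}(F)$ denote the number of reflective numerical semigroups with Frobenius number $F$. Then $\mathrm{nF}(F)=(1-\log 2)F+O(\sqrt{F})$ as $F\to\infty$ (with $\log$ the natural logarithm); in particular $\lim_{F\to\infty}\mathrm{nF}(F)/F=1-\log 2$.
   Context: A numerical semigroup is a submonoid $S$ of $(\mathbb{N}_0,+)$ with finite complement; its genus is the number of elements of $\mathbb{N}_0\setminus S$ and its Frobenius number is its largest gap. A numerical semigroup $S$ of genus $g\ge1$ is called reflective if for every $z\in\{0,1,\dots,g-1\}$ exactly one of $z$ and $z+g$ belongs to $S$. *)

theory Defs
  imports Complex_Main "HOL-Library.Landau_Symbols"
begin

definition numerical_semigroup :: "nat set \<Rightarrow> bool" where
  "numerical_semigroup S \<longleftrightarrow> 0 \<in> S \<and> (\<forall>x\<in>S. \<forall>y\<in>S. x + y \<in> S) \<and> finite (UNIV - S)"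

definition genus :: "nat set \<Rightarrow> nat" where
  "genus S = card (UNIV - S)"

definition frobenius :: "nat set \<Rightarrow> nat" where
  "frobenius S = Max (UNIV - S)"

definition reflective :: "nat set \<Rightarrow> bool" where
  "reflective S \<longleftrightarrow> numerical_semigroup S \<and> genus S \<ge> 1 \<and>
     (\<forall>z < genus S. (z \<in> S) \<noteq> (z + genus S \<in> S))"

definition nF :: "nat \<Rightarrow> nat" where
  "nF F = card {S. reflective S \<and> frobenius S = F}"

end

theory Submission
  imports Defs "HOL-Analysis.Harmonic_Numbers" "HOL-Real_Asymp.Real_Asymp"
begin

text \<open>
  A reflective semigroup \<open>S\<close> of genus \<open>g\<close> already has \<open>g\<close> gaps below \<open>2g\<close>, so it contains every
  \<open>x \<ge> 2g\<close>; reducing modulo its multiplicity \<open>m\<close> shows that below \<open>g\<close> it consists exactly of the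
  multiples of \<open>m\<close>. Hence \<open>S\<close> is determined by \<open>(g, m)\<close>, where \<open>m = g\<close> or \<open>m < g\<close> does not divide \<open>g\<close>,
  and its Frobenius number is \<open>g + \<lfloor>(g - 1)/m\<rfloor> m\<close>. Besides the semigroup with \<open>m = g = F\<close>, those
  with Frobenius number \<open>F\<close> therefore correspond to the moduli \<open>d \<ge> 2\<close> with \<open>0 < F mod 2d < d\<close>,
  i.e. to the integers in the intervals \<open>(F/(2k+1), F/(2k))\<close>, \<open>k \<ge> 1\<close>. Counting the intervals
  with \<open>k \<le> \<surd>F\<close> exactly up to one element each, and the remaining moduli \<open>d < F/(2\<surd>F)\<close> crudely,
  gives \<open>F \<Sum>\<^sub>k (1/(2k) - 1/(2k+1)) + O(\<surd>F) = (1 - log 2) F + O(\<surd>F)\<close>.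
\<close>

section \<open>Reflective semigroups are determined by genus and multiplicity\<close>

text \<open>Every reflective semigroup has this form, with \<open>g\<close> its genus and \<open>m\<close> its multiplicity (or \<open>m = g\<close>).\<close>

definition refl_sg :: "nat \<Rightarrow> nat \<Rightarrow> nat set" where
  "refl_sg g m = {x. (x < g \<and> m dvd x) \<or> (g \<le> x \<and> x < 2*g \<and> \<not> m dvd (x - g)) \<or> 2*g \<le> x}"

lemma card_lessThan_double_diff:
  assumes "\<And>z. z < g \<Longrightarrow> (z \<in> S) \<noteq> (z + g \<in> S)"
  shows "card ({..<2*g} - S) = g"
proof -
  have "bij_betw (\<lambda>z. if z \<in> S then z + g else z) {..<g} ({..<2*g} - S)"
  proof (rule bij_betw_imageI)
    show "inj_on (\<lambda>z. if z \<in> S then z + g else z) {..<g}"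
      by (auto simp: inj_on_def split: if_splits)
    show "(\<lambda>z. if z \<in> S then z + g else z) ` {..<g} = {..<2*g} - S"
    proof (rule set_eqI, rule iffI)
      fix x assume "x \<in> {..<2*g} - S"
      then show "x \<in> (\<lambda>z. if z \<in> S then z + g else z) ` {..<g}"
        using assms[of "x - g"] by (cases "x < g") (auto intro: image_eqI[of _ _ "x - g"])
    qed (use assms in auto)
  qed
  then show ?thesis by (metis bij_betw_same_card card_lessThan)
qed

lemma refl_sg_gaps_subset: "UNIV - refl_sg g m \<subseteq> {..<2*g}"
  by (auto simp: refl_sg_def)

lemma refl_sg_reflect: "z < g \<Longrightarrow> (z \<in> refl_sg g m) \<noteq> (z + g \<in> refl_sg g m)"
  by (auto simp: refl_sg_def)

lemma genus_refl_sg: "genus (refl_sg g m) = g"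
proof -
  have "UNIV - refl_sg g m = {..<2*g} - refl_sg g m"
    using refl_sg_gaps_subset by blast
  then show ?thesis
    unfolding genus_def using card_lessThan_double_diff refl_sg_reflect by metis
qed

lemma numerical_semigroup_refl_sg:
  assumes "1 \<le> g" and "m = g \<or> \<not> m dvd g"
  shows "numerical_semigroup (refl_sg g m)"
  unfolding numerical_semigroup_def
proof (intro conjI ballI)
  show "0 \<in> refl_sg g m" using assms(1) by (simp add: refl_sg_def)
  show "finite (UNIV - refl_sg g m)" using refl_sg_gaps_subset finite_subset by blast
  fix x y assume x: "x \<in> refl_sg g m" and y: "y \<in> refl_sg g m"
  have low: "m dvd z" if "z \<in> refl_sg g m" "z < g" for z using that by (simp add: refl_sg_def)
  have mid: "\<not> m dvd (z - g)" if "z \<in> refl_sg g m" "g \<le> z" "z < 2*g" for z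
    using that by (simp add: refl_sg_def)
  consider "x + y < g" | "2*g \<le> x + y" | "g \<le> x + y" "x + y < 2*g" by linarith
  then show "x + y \<in> refl_sg g m"
  proof cases
    case 1 then show ?thesis using low[OF x] low[OF y] by (simp add: refl_sg_def)
  next
    case 2 then show ?thesis by (simp add: refl_sg_def)
  next
    case 3
    have "\<not> m dvd (x + y - g)"
    proof
      assume dvd: "m dvd (x + y - g)"
      consider "x < g" "y < g" | "x < g" "g \<le> y" | "g \<le> x" "y < g" using 3 by linarith
      then show False
      proof cases
        case 1
        then have "m dvd g"
          using low[OF x] low[OF y] dvd 3 by (metis dvd_add dvd_diff_nat diff_diff_cancel)
        then have "m = g" using assms(2) by blast
        then show False using 1 3 low[OF x] low[OF y] by (auto dest!: dvd_imp_le)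
      next
        case 2
        then have "m dvd x + (y - g)" using dvd by simp
        moreover have "\<not> m dvd (y - g)" using mid[OF y] 2 3 by simp
        ultimately show False using low[OF x] 2 by (metis dvd_add_right_iff)
      next
        case 3
        then have "m dvd y + (x - g)" using dvd by (simp add: add.commute)
        moreover have "\<not> m dvd (x - g)" using mid[OF x] 3 \<open>x + y < 2*g\<close> by simp
        ultimately show False using low[OF y] 3 by (metis dvd_add_right_iff)
      qed
    qed
    then show ?thesis using 3 by (simp add: refl_sg_def)
  qed
qed

lemma reflective_refl_sg:
  assumes "1 \<le> g" and "m = g \<or> \<not> m dvd g"
  shows "reflective (refl_sg g m)"
  unfolding reflective_def genus_refl_sg
  using numerical_semigroup_refl_sg[OF assms] assms(1) refl_sg_reflect by blast

lemma frobenius_refl_sg: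
  assumes "1 \<le> g" and "1 \<le> m"
  shows "frobenius (refl_sg g m) = g + (g - 1) div m * m"
  unfolding frobenius_def
proof (rule Max_eqI)
  show "finite (UNIV - refl_sg g m)" using refl_sg_gaps_subset finite_subset by blast
  have "(g - 1) div m * m < g" using assms(1) div_times_less_eq_dividend[of "g - 1" m] by linarith
  then show "g + (g - 1) div m * m \<in> UNIV - refl_sg g m" by (simp add: refl_sg_def)
  fix y assume "y \<in> UNIV - refl_sg g m"
  then consider "y < g" | "g \<le> y" "y < 2*g" "m dvd (y - g)"
    unfolding refl_sg_def by (cases "y < g") auto
  then show "y \<le> g + (g - 1) div m * m"
  proof cases
    case 2
    then have "(y - g) div m \<le> (g - 1) div m" by (intro div_le_mono) linarith
    then have "y - g \<le> (g - 1) div m * m"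
      using \<open>m dvd (y - g)\<close> by (metis dvd_div_mult_self mult_le_mono1)
    then show ?thesis using 2 by simp
  qed simp
qed

lemma refl_sg_eq_if_le:
  assumes "g \<le> m"
  shows "refl_sg g m = refl_sg g g"
proof -
  have "m dvd z \<longleftrightarrow> g dvd z" if "z < g" for z
  proof -
    have "m dvd z \<longleftrightarrow> z = 0" "g dvd z \<longleftrightarrow> z = 0" using assms that by (auto dest: dvd_imp_le)
    then show ?thesis by simp
  qed
  then show ?thesis
    unfolding refl_sg_def by (intro Collect_cong) (metis add_diff_cancel_left' less_diff_conv2 mult_2 not_le)
qed

lemma reflective_gaps_lt_double_genus:
  assumes "reflective S"
  shows "UNIV - S = {..<2 * genus S} - S"
proof -
  have fin: "finite (UNIV - S)" and reflect: "\<And>z. z < genus S \<Longrightarrow> (z \<in> S) \<noteq> (z + genus S \<in> S)"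
    using assms by (auto simp: reflective_def numerical_semigroup_def)
  have "card ({..<2 * genus S} - S) = card (UNIV - S)"
    using card_lessThan_double_diff[OF reflect] by (simp add: genus_def)
  moreover have "{..<2 * genus S} - S \<subseteq> UNIV - S" by blast
  ultimately show ?thesis using card_subset_eq[OF fin] by metis
qed

lemma reflective_mem_if_ge_double_genus:
  assumes "reflective S" and "2 * genus S \<le> x"
  shows "x \<in> S"
proof (rule ccontr)
  assume "x \<notin> S"
  then have "x \<in> {..<2 * genus S}" using reflective_gaps_lt_double_genus[OF assms(1)] by blast
  then show False using assms(2) by simp
qed

lemma reflective_multiplicity:
  assumes "reflective S"
  defines "m \<equiv> LEAST x. 0 < x \<and> x \<in> S"
  shows "0 < m" "m \<in> S" "\<And>x. 0 < x \<Longrightarrow> x < m \<Longrightarrow> x \<notin> S"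
proof -
  have "1 \<le> genus S" using assms(1) by (simp add: reflective_def)
  moreover have "2 * genus S \<in> S" using reflective_mem_if_ge_double_genus[OF assms(1)] by simp
  ultimately have "0 < 2 * genus S \<and> 2 * genus S \<in> S" by simp
  then have "0 < m \<and> m \<in> S" unfolding m_def by (rule LeastI)
  then show "0 < m" "m \<in> S" by simp_all
  fix x assume "0 < x" "x < m"
  then show "x \<notin> S" using not_less_Least[of x "\<lambda>x. 0 < x \<and> x \<in> S"] unfolding m_def by blast
qed

lemma reflective_eq_refl_sg:
  assumes "reflective S"
  defines "m \<equiv> LEAST x. 0 < x \<and> x \<in> S"
  shows "S = refl_sg (genus S) m"
proof -
  define g where "g = genus S"
  have S0: "0 \<in> S" and add: "\<And>x y. x \<in> S \<Longrightarrow> y \<in> S \<Longrightarrow> x + y \<in> S"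
    and reflect: "\<And>z. z < g \<Longrightarrow> (z \<in> S) \<noteq> (z + g \<in> S)"
    using assms(1) by (auto simp: reflective_def numerical_semigroup_def g_def)
  note m = reflective_multiplicity[OF assms(1), folded m_def]
  have mult: "k * m \<in> S" for k by (induction k) (use S0 m(2) add in auto)
  have low: "x \<in> S \<longleftrightarrow> m dvd x" if "x < g" for x
  proof
    assume "m dvd x" then show "x \<in> S" using mult by (auto simp: mult.commute elim!: dvdE)
  next
    assume xS: "x \<in> S"
    show "m dvd x"
    proof (rule ccontr)
      assume "\<not> m dvd x"
      then have "x mod m \<notin> S" using m(1,3) by (simp add: dvd_eq_mod_eq_0)
      moreover have "x mod m < g" using that mod_less_eq_dividend[of x m] by linarith
      ultimately have "x mod m + g \<in> S" using reflect by blast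
      \<comment> \<open>adding the multiple \<open>x div m * m\<close> of the multiplicity lands on the gap \<open>x + g\<close>\<close>
      then have "x div m * m + (x mod m + g) \<in> S" using mult add by blast
      then show False using reflect[OF that] xS by simp
    qed
  qed
  show ?thesis
  proof (rule set_eqI)
    fix x
    consider "x < g" | "g \<le> x" "x < 2*g" | "2*g \<le> x" by linarith
    then show "x \<in> S \<longleftrightarrow> x \<in> refl_sg (genus S) m"
    proof cases
      case 1
      then show ?thesis using low[OF 1] by (simp add: refl_sg_def g_def)
    next
      case 2
      then have "x - g < g" "x - g + g = x" by auto
      then have "x \<in> S \<longleftrightarrow> \<not> m dvd (x - g)" using reflect[of "x - g"] low[of "x - g"] by auto
      then show ?thesis using 2 by (simp add: refl_sg_def g_def)
    next
      case 3
      then show ?thesis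
        using reflective_mem_if_ge_double_genus[OF assms(1)] by (simp add: refl_sg_def g_def)
    qed
  qed
qed

lemma reflective_obtain_refl_sg:
  assumes "reflective S"
  obtains m where "S = refl_sg (genus S) m" "1 \<le> m" "m = genus S \<or> m < genus S \<and> \<not> m dvd genus S"
proof -
  obtain g where g: "genus S = g" "1 \<le> g" using assms by (auto simp: reflective_def)
  define m where "m = (LEAST x. 0 < x \<and> x \<in> S)"
  have S: "S = refl_sg g m" unfolding g(1)[symmetric] m_def by (rule reflective_eq_refl_sg[OF assms])
  have add: "\<And>x y. x \<in> S \<Longrightarrow> y \<in> S \<Longrightarrow> x + y \<in> S"
    using assms by (simp add: reflective_def numerical_semigroup_def)
  have m: "0 < m" "m \<in> S" using reflective_multiplicity[OF assms, folded m_def] by blast+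
  show ?thesis
  proof (cases "g \<le> m")
    case True
    then show ?thesis using that[of g] S refl_sg_eq_if_le[OF True] g by simp
  next
    case False
    have "\<not> m dvd g"
    proof
      \<comment> \<open>otherwise \<open>g - m\<close> and hence \<open>g = (g - m) + m\<close> would lie in \<open>S\<close>, but \<open>0 \<in> S\<close> forces \<open>g \<notin> S\<close>\<close>
      assume "m dvd g"
      then have "g - m \<in> S" using S False m(1) by (simp add: refl_sg_def dvd_diff_nat)
      moreover have "g - m + m = g" using False by simp
      ultimately have "g \<in> S" using add[OF _ m(2)] by metis
      then show False using S g(2) by (simp add: refl_sg_def)
    qed
    then show ?thesis using that[of m] S False m(1) g(1) by simp
  qed
qed

section \<open>Counting by the Frobenius number\<close>

definition frobenius_moduli :: "nat \<Rightarrow> nat set" where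
  "frobenius_moduli F = {d. 2 \<le> d \<and> 2*d < F \<and> 0 < F mod (2*d) \<and> F mod (2*d) < d}"

text \<open>
  Writing \<open>g = q m + r\<close> with \<open>0 < r < m\<close>, the Frobenius number of \<open>refl_sg g m\<close> is \<open>F = q (2m) + r\<close>;
  so \<open>m\<close> is one of the \<open>frobenius_moduli F\<close> and \<open>g\<close> is recovered from \<open>F\<close> and \<open>m\<close> as follows.
\<close>

definition genus_for_modulus :: "nat \<Rightarrow> nat \<Rightarrow> nat" where
  "genus_for_modulus F d = F div (2*d) * d + F mod (2*d)"

lemma finite_frobenius_moduli: "finite (frobenius_moduli F)"
  by (rule finite_subset[of _ "{..<F}"]) (auto simp: frobenius_moduli_def)

lemma pred_add_mult_div_eq:
  assumes "0 < r" "r \<le> m"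
  shows "(r + q * m - 1) div m = (q::nat)"
proof -
  have "r + q * m - 1 = (r - 1) + q * m" using assms(1) by simp
  then have "(r + q * m - 1) div m = ((r - 1) + q * m) div m" by (simp only:)
  also have "\<dots> = q + (r - 1) div m" using assms by (intro div_mult_self1) simp
  also have "(r - 1) div m = 0" using assms by (intro div_less) linarith
  finally show ?thesis by simp
qed

lemma frobenius_moduli_genus_for_modulus:
  assumes "d \<in> frobenius_moduli F"
  defines "g \<equiv> genus_for_modulus F d"
  shows "d < g" "\<not> d dvd g" "g + (g - 1) div d * d = F" "g < F"
proof -
  define q where "q = F div (2*d)"
  define r where "r = F mod (2*d)"
  have d: "2 \<le> d" "2*d < F" and r: "0 < r" "r < d"
    using assms(1) unfolding frobenius_moduli_def r_def by auto
  have F: "F = r + q*(2*d)" unfolding q_def r_def by (metis add.commute div_mult_mod_eq)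
  have q: "1 \<le> q" using F d r by (cases q) auto
  have g_eq: "g = r + q * d" unfolding g_def genus_for_modulus_def q_def r_def by simp
  have "d \<le> q * d" using q by simp
  then show "d < g" using g_eq r by linarith
  show "\<not> d dvd g" using g_eq r by (simp add: dvd_eq_mod_eq_0)
  have "(g - 1) div d = q" unfolding g_eq using r by (intro pred_add_mult_div_eq) simp_all
  then show "g + (g - 1) div d * d = F" using g_eq F by (simp add: algebra_simps)
  show "g < F" using g_eq F q d by simp
qed

lemma refl_sg_modulus_in_frobenius_moduli:
  assumes "1 \<le> m" "m < g" "\<not> m dvd g"
  defines "F \<equiv> g + (g - 1) div m * m"
  shows "m \<in> frobenius_moduli F" "genus_for_modulus F m = g"
proof -
  define q where "q = g div m"
  define r where "r = g mod m"
  have g: "g = r + q * m" unfolding q_def r_def by simp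
  have r: "0 < r" "r < m" using assms(1,3) unfolding r_def by (simp_all add: dvd_eq_mod_eq_0)
  have q: "1 \<le> q" using g r assms(2) by (cases q) auto
  have "(g - 1) div m = q" unfolding g using r by (intro pred_add_mult_div_eq) simp_all
  then have F: "F = r + q * (2*m)" unfolding F_def using g by (simp add: algebra_simps)
  then have "F div (2*m) = q" "F mod (2*m) = r" using r by auto
  moreover have "2*m < F"
  proof -
    have "2*m \<le> q * (2*m)" using q by simp
    then show ?thesis using F r by linarith
  qed
  ultimately show "m \<in> frobenius_moduli F" "genus_for_modulus F m = g"
    using r g assms(3) by (auto simp: frobenius_moduli_def genus_for_modulus_def)
qed

lemma reflective_frobenius_eq:
  assumes "1 \<le> F"
  shows "{S. reflective S \<and> frobenius S = F} =
    insert (refl_sg F F) ((\<lambda>d. refl_sg (genus_for_modulus F d) d) ` frobenius_moduli F)"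
proof (rule set_eqI, rule iffI)
  fix S assume "S \<in> {S. reflective S \<and> frobenius S = F}"
  then have r: "reflective S" and fr: "frobenius S = F" by auto
  obtain g where g: "genus S = g" "1 \<le> g" using r by (simp add: reflective_def)
  obtain m where S: "S = refl_sg g m" and m: "1 \<le> m" and mc: "m = g \<or> m < g \<and> \<not> m dvd g"
    by (rule reflective_obtain_refl_sg[OF r, unfolded g(1)])
  have F_eq: "F = g + (g - 1) div m * m"
    using fr frobenius_refl_sg[OF g(2) m] S by simp
  show "S \<in> insert (refl_sg F F) ((\<lambda>d. refl_sg (genus_for_modulus F d) d) ` frobenius_moduli F)"
  proof (cases "m = g")
    case True
    then have "F = g" using F_eq g(2) by simp
    then show ?thesis using S True by simp
  next
    case False
    then have "m < g" "\<not> m dvd g" using mc by auto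
    from refl_sg_modulus_in_frobenius_moduli[OF m this, folded F_eq]
    have "S \<in> (\<lambda>d. refl_sg (genus_for_modulus F d) d) ` frobenius_moduli F"
      unfolding S by (intro image_eqI[of _ _ m]) simp_all
    then show ?thesis by simp
  qed
next
  fix S assume "S \<in> insert (refl_sg F F) ((\<lambda>d. refl_sg (genus_for_modulus F d) d) ` frobenius_moduli F)"
  then consider "S = refl_sg F F" | d where "d \<in> frobenius_moduli F" "S = refl_sg (genus_for_modulus F d) d"
    by auto
  then show "S \<in> {S. reflective S \<and> frobenius S = F}"
  proof cases
    case 1
    then show ?thesis using reflective_refl_sg[OF assms] frobenius_refl_sg[OF assms assms] assms by simp
  next
    case 2
    note g = frobenius_moduli_genus_for_modulus[OF 2(1)]
    have d: "1 \<le> d" using 2(1) by (simp add: frobenius_moduli_def)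
    have "1 \<le> genus_for_modulus F d" using g(1) by simp
    then show ?thesis using reflective_refl_sg frobenius_refl_sg[OF _ d] g(2,3) 2(2) by simp
  qed
qed

lemma inj_on_refl_sg_frobenius_moduli:
  "inj_on (\<lambda>d. refl_sg (genus_for_modulus F d) d) (frobenius_moduli F)"
proof -
  \<comment> \<open>the modulus is recovered as the least positive element of the semigroup\<close>
  have le: "d1 \<le> d2" if d: "d1 \<in> frobenius_moduli F" "d2 \<in> frobenius_moduli F"
    and eq: "refl_sg (genus_for_modulus F d1) d1 = refl_sg (genus_for_modulus F d2) d2" for d1 d2
  proof (rule ccontr)
    assume "\<not> d1 \<le> d2"
    then have "d2 < genus_for_modulus F d1" using frobenius_moduli_genus_for_modulus(1)[OF d(1)] by simp
    moreover have "d2 \<in> refl_sg (genus_for_modulus F d1) d1"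
      using eq frobenius_moduli_genus_for_modulus(1)[OF d(2)] by (simp add: refl_sg_def)
    ultimately have "d1 dvd d2" by (simp add: refl_sg_def)
    then show False using \<open>\<not> d1 \<le> d2\<close> d(2) by (auto simp: frobenius_moduli_def dest: dvd_imp_le)
  qed
  show ?thesis by (rule inj_onI) (use le in \<open>metis order_antisym\<close>)
qed

lemma nF_eq_Suc_card_frobenius_moduli:
  assumes "1 \<le> F"
  shows "nF F = Suc (card (frobenius_moduli F))"
proof -
  let ?f = "\<lambda>d. refl_sg (genus_for_modulus F d) d"
  have "refl_sg F F \<notin> ?f ` frobenius_moduli F"
  proof
    assume "refl_sg F F \<in> ?f ` frobenius_moduli F"
    then obtain d where d: "d \<in> frobenius_moduli F" "refl_sg F F = ?f d" by auto
    then have "F = genus_for_modulus F d" using genus_refl_sg by metis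
    then show False using frobenius_moduli_genus_for_modulus(4)[OF d(1)] by simp
  qed
  then have "nF F = Suc (card (?f ` frobenius_moduli F))"
    unfolding nF_def reflective_frobenius_eq[OF assms] using finite_frobenius_moduli by simp
  also have "card (?f ` frobenius_moduli F) = card (frobenius_moduli F)"
    by (rule card_image[OF inj_on_refl_sg_frobenius_moduli])
  finally show ?thesis .
qed

section \<open>Asymptotics\<close>

lemma sum_reciprocal_pairs_eq_alternating:
  "(\<Sum>k=1..K. 1/(2*real k) - 1/(2*real k+1)) = 1 - (\<Sum>i<2*K+1. (-1)^i / real (Suc i))"
proof (induction K)
  case (Suc K)
  have "(\<Sum>i<2 * Suc K + 1. (-1)^i / real (Suc i)) =
      (\<Sum>i<2*K+1. (-1)^i / real (Suc i)) - 1/(2*real (Suc K)) + 1/(2*real (Suc K)+1)"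
    by (simp add: power_add power_mult)
  then show ?case using Suc.IH by simp
qed simp

lemma alternating_harmonic_partial_sums_bounds:
  "(\<Sum>i<2*n+2. (-1)^i / real (Suc i)) \<le> ln 2" "ln 2 \<le> (\<Sum>i<2*n+1. (-1)^i / real (Suc i))"
proof -
  let ?a = "\<lambda>i. inverse (real (Suc i))"
  have leibniz: "\<And>n. (\<Sum>i<2*n. (-1)^i * ?a i) \<le> (\<Sum>i. (-1)^i * ?a i)"
    "\<And>n. (\<Sum>i. (-1)^i * ?a i) \<le> (\<Sum>i<2*n+1. (-1)^i * ?a i)"
    by (rule summable_Leibniz'[OF LIMSEQ_inverse_real_of_nat]; simp add: field_simps)+
  have eq: "(\<lambda>i. (-1)^i * ?a i) = (\<lambda>i. (-1)^i / real (Suc i))" by (simp add: divide_inverse)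
  have ln2: "(\<Sum>i. (-1)^i / real (Suc i)) = ln 2"
    using alternating_harmonic_series_sums by (rule sums_unique[symmetric])
  show "(\<Sum>i<2*n+2. (-1)^i / real (Suc i)) \<le> ln 2"
    using leibniz(1)[of "n+1"] unfolding eq ln2 by (simp add: algebra_simps)
  show "ln 2 \<le> (\<Sum>i<2*n+1. (-1)^i / real (Suc i))"
    using leibniz(2)[of n] unfolding eq ln2 .
qed

lemma sum_reciprocal_pairs_bounds:
  "1 - ln 2 - 1/(2*real K+2) \<le> (\<Sum>k=1..K. 1/(2*real k) - 1/(2*real k+1))"
  "(\<Sum>k=1..K. 1/(2*real k) - 1/(2*real k+1)) \<le> 1 - ln 2"
proof -
  have "(\<Sum>i<2*K+2. (-1)^i / real (Suc i)) = (\<Sum>i<2*K+1. (-1)^i / real (Suc i)) - 1/(2*real K+2)"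
    by (simp add: power_add power_mult add.commute)
  then show "1 - ln 2 - 1/(2*real K+2) \<le> (\<Sum>k=1..K. 1/(2*real k) - 1/(2*real k+1))"
    "(\<Sum>k=1..K. 1/(2*real k) - 1/(2*real k+1)) \<le> 1 - ln 2"
    using alternating_harmonic_partial_sums_bounds[of K]
    unfolding sum_reciprocal_pairs_eq_alternating by linarith+
qed

lemma card_nat_between_bounds:
  fixes a b :: real
  assumes "0 \<le> a" "a \<le> b"
  shows "\<bar>real (card {d::nat. a < real d \<and> real d < b}) - (b - a)\<bar> \<le> 1"
proof -
  define l where "l = nat \<lfloor>a\<rfloor> + 1"
  define u where "u = nat \<lceil>b\<rceil>"
  have "{d::nat. a < real d \<and> real d < b} = {l..<u}"
    unfolding l_def u_def using assms
    by (auto simp: floor_less_iff less_ceiling_iff nat_less_iff Suc_le_eq zless_nat_eq_int_zless)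
  then have "card {d::nat. a < real d \<and> real d < b} = u - l" by simp
  moreover have "b \<le> real u" "real u < b + 1" "a < real l" "real l \<le> a + 1"
    unfolding u_def l_def using assms by linarith+
  ultimately show ?thesis using assms by (cases "l \<le> u") (simp_all add: of_nat_diff)
qed

lemma frobenius_moduli_div_ge_1: "d \<in> frobenius_moduli F \<Longrightarrow> 1 \<le> F div (2*d)"
  by (auto simp: frobenius_moduli_def Suc_le_eq div_greater_zero_iff)

lemma frobenius_moduli_slice:
  assumes "1 \<le> k"
  shows "{d \<in> frobenius_moduli F. F div (2*d) = k} =
    {d. real F / (2*real k+1) < real d \<and> real d < real F / (2*real k)}"
proof -
  have "d \<in> frobenius_moduli F \<and> F div (2*d) = k \<longleftrightarrow> 2*k*d < F \<and> F < (2*k+1)*d" for d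
  proof
    assume d: "d \<in> frobenius_moduli F \<and> F div (2*d) = k"
    have "F = F mod (2*d) + k * (2*d)" using d by (metis add.commute div_mult_mod_eq)
    then show "2*k*d < F \<and> F < (2*k+1)*d" using d by (simp add: frobenius_moduli_def algebra_simps)
  next
    assume F: "2*k*d < F \<and> F < (2*k+1)*d"
    define r where "r = F - 2*k*d"
    have r: "0 < r" "r < d" and F_eq: "F = r + k*(2*d)"
      using F unfolding r_def by (auto simp: algebra_simps)
    then have "F div (2*d) = k" "F mod (2*d) = r" by auto
    moreover have "2*d \<le> k*(2*d)" using assms by simp
    then have "2*d < F" using r F_eq by linarith
    ultimately show "d \<in> frobenius_moduli F \<and> F div (2*d) = k"
      using r by (auto simp: frobenius_moduli_def)
  qed
  moreover have "2*k*d < F \<longleftrightarrow> real d < real F / (2*real k)" for d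
  proof -
    have "real d * (2*real k) = real (2*k*d)" by simp
    then have "2*k*d < F \<longleftrightarrow> real d * (2*real k) < real F" by (simp only: of_nat_less_iff)
    then show ?thesis using assms by (simp add: pos_less_divide_eq)
  qed
  moreover have "F < (2*k+1)*d \<longleftrightarrow> real F / (2*real k+1) < real d" for d
  proof -
    have "real d * (2*real k+1) = real ((2*k+1)*d)" by (simp add: algebra_simps)
    then have "F < (2*k+1)*d \<longleftrightarrow> real F < real d * (2*real k+1)" by (simp only: of_nat_less_iff)
    then show ?thesis by (simp add: pos_divide_less_eq)
  qed
  ultimately show ?thesis by blast
qed

lemma card_frobenius_moduli_split:
  "card (frobenius_moduli F) =
     (\<Sum>k=1..K. card {d \<in> frobenius_moduli F. F div (2*d) = k})
     + card {d \<in> frobenius_moduli F. K < F div (2*d)}"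
proof -
  let ?slice = "\<lambda>k. {d \<in> frobenius_moduli F. F div (2*d) = k}"
  let ?tail = "{d \<in> frobenius_moduli F. K < F div (2*d)}"
  have fin: "finite A" if "A \<subseteq> frobenius_moduli F" for A
    using that finite_frobenius_moduli finite_subset by blast
  have "frobenius_moduli F = (\<Union>k\<in>{1..K}. ?slice k) \<union> ?tail"
    using frobenius_moduli_div_ge_1 by (auto simp: not_less)
  then have "card (frobenius_moduli F) = card ((\<Union>k\<in>{1..K}. ?slice k) \<union> ?tail)" by simp
  also have "\<dots> = card (\<Union>k\<in>{1..K}. ?slice k) + card ?tail"
    by (rule card_Un_disjoint) (auto intro: fin)
  also have "card (\<Union>k\<in>{1..K}. ?slice k) = (\<Sum>k=1..K. card (?slice k))"
    by (rule card_UN_disjoint) (auto intro: fin)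
  finally show ?thesis .
qed

lemma card_frobenius_moduli_tail:
  "real (card {d \<in> frobenius_moduli F. K < F div (2*d)}) \<le> real F / (2*real K + 2)"
proof -
  have "{d \<in> frobenius_moduli F. K < F div (2*d)} \<subseteq> {1..F div (2*K+2)}"
  proof
    fix d assume d: "d \<in> {d \<in> frobenius_moduli F. K < F div (2*d)}"
    then have "0 < d" "(K+1) * (2*d) \<le> F"
      by (auto simp: frobenius_moduli_def less_eq_div_iff_mult_less_eq Suc_le_eq[symmetric])
    then show "d \<in> {1..F div (2*K+2)}"
      by (simp add: less_eq_div_iff_mult_less_eq algebra_simps)
  qed
  then have "card {d \<in> frobenius_moduli F. K < F div (2*d)} \<le> card {1..F div (2*K+2)}"
    by (rule card_mono[rotated]) simp
  then have "card {d \<in> frobenius_moduli F. K < F div (2*d)} \<le> F div (2*K+2)" by simp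
  then have "real (card {d \<in> frobenius_moduli F. K < F div (2*d)}) \<le> real (F div (2*K+2))"
    by simp
  also have "\<dots> \<le> real F / real (2*K+2)" by (rule of_nat_div_le_of_nat)
  also have "\<dots> = real F / (2*real K + 2)" by simp
  finally show ?thesis .
qed

lemma card_frobenius_moduli_approx:
  "\<bar>real (card (frobenius_moduli F)) - (1 - ln 2) * real F\<bar> \<le> real K + real F / (2*real K + 2)"
proof -
  let ?slice = "\<lambda>k. {d \<in> frobenius_moduli F. F div (2*d) = k}"
  let ?w = "\<lambda>k. 1/(2*real k) - 1/(2*real k+1)"
  have slice: "\<bar>real (card (?slice k)) - real F * ?w k\<bar> \<le> 1" if "k \<in> {1..K}" for k
  proof -
    have k: "1 \<le> k" using that by simp
    have "real F / (2*real k+1) \<le> real F / (2*real k)" using k by (intro divide_left_mono) auto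
    from card_nat_between_bounds[OF _ this] show ?thesis
      unfolding frobenius_moduli_slice[OF k] using k by (simp add: field_simps)
  qed
  have "\<bar>(\<Sum>k=1..K. real (card (?slice k))) - real F * (\<Sum>k=1..K. ?w k)\<bar> \<le> real K"
  proof -
    have "\<bar>(\<Sum>k=1..K. real (card (?slice k))) - real F * (\<Sum>k=1..K. ?w k)\<bar>
        = \<bar>\<Sum>k=1..K. real (card (?slice k)) - real F * ?w k\<bar>"
      by (simp only: sum_distrib_left sum_subtractf[symmetric])
    also have "\<dots> \<le> (\<Sum>k=1..K. \<bar>real (card (?slice k)) - real F * ?w k\<bar>)" by (rule sum_abs)
    also have "\<dots> \<le> (\<Sum>k=1..K. 1)" by (rule sum_mono) (rule slice)
    finally show ?thesis by simp
  qed
  moreover have "(1 - ln 2) * real F - real F / (2*real K + 2) \<le> real F * (\<Sum>k=1..K. ?w k)"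
    "real F * (\<Sum>k=1..K. ?w k) \<le> (1 - ln 2) * real F"
    using mult_left_mono[OF sum_reciprocal_pairs_bounds(1)[of K], of "real F"]
      mult_left_mono[OF sum_reciprocal_pairs_bounds(2)[of K], of "real F"]
    by (simp_all add: algebra_simps)
  moreover note card_frobenius_moduli_tail[of F K]
  ultimately show ?thesis
    unfolding card_frobenius_moduli_split[of F K] by (simp add: abs_le_iff)
qed

lemma nF_approx:
  assumes "1 \<le> F"
  shows "\<bar>real (nF F) - (1 - ln 2) * real F\<bar> \<le> 4 * sqrt (real F)"
proof -
  define r where "r = sqrt (real F)"
  have r: "1 \<le> r" "r * r = real F" unfolding r_def using assms by simp_all
  \<comment> \<open>cutting the slices at \<open>K \<approx> \<surd>F\<close> balances the two error terms\<close>
  define K where "K = nat \<lceil>r\<rceil>"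
  have K: "r \<le> real K" "real K \<le> r + 1" unfolding K_def using r by linarith+
  have "real F / (2 * real K + 2) \<le> real F / (2 * r)"
    using K r by (intro divide_left_mono) auto
  also have "\<dots> = r / 2" using r by (simp add: field_simps)
  finally have "real F / (2 * real K + 2) \<le> r / 2" .
  moreover have "real (nF F) = 1 + real (card (frobenius_moduli F))"
    using nF_eq_Suc_card_frobenius_moduli[OF assms] by simp
  ultimately show ?thesis
    using card_frobenius_moduli_approx[of F K] K r unfolding r_def[symmetric] by linarith
qed

theorem mainTheorem20:
  shows "(\<lambda>F. real (nF F) - (1 - ln 2) * real F) \<in> O(\<lambda>F. sqrt (real F))
         \<and> ((\<lambda>F. real (nF F) / real F) \<longlongrightarrow> 1 - ln 2) at_top"
proof
  show big: "(\<lambda>F. real (nF F) - (1 - ln 2) * real F) \<in> O(\<lambda>F. sqrt (real F))"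
    by (intro bigoI[where c = 4] eventually_mono[OF eventually_ge_at_top[of 1]])
      (simp add: nF_approx)
  have "(\<lambda>F. sqrt (real F)) \<in> o(\<lambda>F. real F)" by real_asymp
  then have "((\<lambda>F. (real (nF F) - (1 - ln 2) * real F) / real F) \<longlongrightarrow> 0) at_top"
    by (intro smalloD_tendsto landau_o.big_small_trans[OF big])
  then have "((\<lambda>F. real (nF F) / real F - (1 - ln 2)) \<longlongrightarrow> 0) at_top"
    by (rule Lim_transform_eventually)
      (use eventually_ge_at_top[of "1::nat"] in \<open>eventually_elim, simp add: field_simps\<close>)
  then show "((\<lambda>F. real (nF F) / real F) \<longlongrightarrow> 1 - ln 2) at_top"
    by (rule LIM_zero_cancel)
qed

end
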